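(* All on-site potentials of the tridiagonalized chain unitarily mapped from any chiral-symmetric system are zero for any chosen anchor site.
   Context: A chiral-symmetric system is one with a Hermitian Hamiltonian matrix $H$ (of even dimension $n$) for which there exists a position basis, split into two sublattices $A$ and $B$, such that $\Gamma H = -H\Gamma$ with $\Gamma = I_{(n/2)\times(n/2)}\otimes\sigma_z$ ($\sigma_z$ the Pauli matrix); the system may be nonlocal or higher-dimensional. The system is mapped onto a 1D chain with only nearest-neighbor couplings by an "improved Householder" tridiagonalization: one chooses an anchor site $m$ (any site of the original system), exchanges the first and $m$-th rows and the corresponding columns of $H$ via a permutation matrix $\bar V$, and then applies the standard Householder tridiagonalization (starting from the first row and column) to $\bar V^{\dagger}H\bar V$, giving a unitary $V^{*}$ with $V^{*}_{11}=1$ and a tridiagonal matrix $H^{*}_{\mathrm{eff}} = V^{*\dagger}(\bar V^{\dagger}H\bar V)V^{*}$, whose subdiagonal entries are made real and positive by elementary sign changes (diagonal entries unchanged). The overall map is unitary, $H_{\mathrm{eff}} = (\bar V V^{*})^{\dagger} H (\bar V V^{*})$, and the dynamics of the anchor site is faithfully mapped to the first site of the new chain. The on-site potentials of the tridiagonalized chain are the diagonal entries of the tridiagonal Hamiltonian. The nontrivial case in which the tridiagonalized matrix has nonzero subdiagonal elements is considered. *)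

theory Defs
  imports "Jordan_Normal_Form.Schur_Decomposition"
begin

text \<open>Matrices are complex n x n matrices (Jordan_Normal_Form), indices 0..n-1.
  Sites 0,2,4,... form sublattice A and 1,3,5,... sublattice B.\<close>

definition hermitian_mat :: "nat \<Rightarrow> complex mat \<Rightarrow> bool" where
  "hermitian_mat n H \<longleftrightarrow> H \<in> carrier_mat n n \<and> mat_adjoint H = H"

definition unitary_mat :: "nat \<Rightarrow> complex mat \<Rightarrow> bool" where
  "unitary_mat n U \<longleftrightarrow> U \<in> carrier_mat n n \<and> mat_adjoint U * U = 1\<^sub>m n \<and> U * mat_adjoint U = 1\<^sub>m n"

text \<open>Gamma = I_(n/2) (x) sigma_z = diag(1,-1,1,-1,...).\<close>
definition chiral_op :: "nat \<Rightarrow> complex mat" where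
  "chiral_op n = mat n n (\<lambda>(i,j). if i = j then (if even i then 1 else -1) else 0)"

definition chiral_symmetric :: "nat \<Rightarrow> complex mat \<Rightarrow> bool" where
  "chiral_symmetric n H \<longleftrightarrow> even n \<and> hermitian_mat n H \<and>
     chiral_op n * H = - (H * chiral_op n)"

definition swap_perm_mat :: "nat \<Rightarrow> nat \<Rightarrow> complex mat" where
  "swap_perm_mat n m = mat n n (\<lambda>(i,j).
     if (i = 0 \<and> j = m) \<or> (i = m \<and> j = 0) \<or> (i = j \<and> i \<noteq> 0 \<and> i \<noteq> m) then 1 else 0)"

definition tridiagonal :: "nat \<Rightarrow> complex mat \<Rightarrow> bool" where
  "tridiagonal n T \<longleftrightarrow> T \<in> carrier_mat n n \<and>
     (\<forall>i<n. \<forall>j<n. (j > i + 1 \<or> i > j + 1) \<longrightarrow> T $$ (i,j) = 0)"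

definition nonzero_subdiagonal :: "nat \<Rightarrow> complex mat \<Rightarrow> bool" where
  "nonzero_subdiagonal n T \<longleftrightarrow> (\<forall>i. i + 1 < n \<longrightarrow> T $$ (i+1, i) \<noteq> 0)"

end

theory Submission
  imports Defs
begin

(* Let U = P Vs be the overall unitary, so that the chain Hamiltonian is T = U^* H U, and transport
   the chiral operator along with it: G = U^* Gamma U is Hermitian and anticommutes with T.
   Unitarity and Vs(0,0) = 1 force U e_0 = e_m, hence G e_0 = Gamma(m,m) e_0.  Column by column,
   G T = - T G with T tridiagonal and its subdiagonal nowhere zero then pins G down to
   Gamma(m,m) Gamma: the chain is chiral symmetric with respect to its own even/odd sites.
   Comparing diagonal entries of Gamma T = - T Gamma gives T(k,k) = 0. *)

lemma sum_eq_single: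
  assumes "finite A" "a \<in> A" "\<And>x. x \<in> A \<Longrightarrow> x \<noteq> a \<Longrightarrow> f x = 0"
  shows "sum f A = f a"
  using sum.mono_neutral_right[of A "{a}" f] assms by auto

lemma index_mult_mat_sum:
  assumes "A \<in> carrier_mat r k" "B \<in> carrier_mat k c" "i < r" "j < c"
  shows "(A * B) $$ (i,j) = (\<Sum>l<k. A $$ (i,l) * B $$ (l,j))"
  using assms by (auto simp: scalar_prod_def atLeast0LessThan intro!: sum.cong)

lemma index_mult_mat_unit_col:
  fixes A B :: "'a :: semiring_1 mat"
  assumes "A \<in> carrier_mat r k" "B \<in> carrier_mat k c" "i < r" "j < c" "p < k"
    and "\<And>l. l < k \<Longrightarrow> B $$ (l,j) = (if l = p then 1 else 0)"
  shows "(A * B) $$ (i,j) = A $$ (i,p)"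
proof -
  have "(A * B) $$ (i,j) = (\<Sum>l<k. A $$ (i,l) * B $$ (l,j))"
    using assms(1-4) by (rule index_mult_mat_sum)
  also have "\<dots> = A $$ (i,p) * B $$ (p,j)"
    by (rule sum_eq_single) (use assms in auto)
  finally show ?thesis using assms by simp
qed

lemma dim_mat_adjoint [simp]:
  "dim_row (mat_adjoint A) = dim_col A" "dim_col (mat_adjoint A) = dim_row A"
  unfolding mat_adjoint_def by auto

lemma mat_adjoint_carrier [simp]: "A \<in> carrier_mat r c \<Longrightarrow> mat_adjoint A \<in> carrier_mat c r"
  by auto

lemma index_mat_adjoint [simp]:
  "i < dim_col A \<Longrightarrow> j < dim_row A \<Longrightarrow> mat_adjoint A $$ (i,j) = conjugate (A $$ (j,i))"
  unfolding mat_adjoint_def by (simp add: mat_of_rows_index)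

lemma mat_adjoint_adjoint [simp]: "mat_adjoint (mat_adjoint A) = A"
  by (rule eq_matI) auto

lemma mat_adjoint_mult:
  fixes A B :: "'a :: conjugatable_field mat"
  assumes "A \<in> carrier_mat r k" "B \<in> carrier_mat k c"
  shows "mat_adjoint (A * B) = mat_adjoint B * mat_adjoint A"
proof (rule eq_matI)
  fix i j assume "i < dim_row (mat_adjoint B * mat_adjoint A)" "j < dim_col (mat_adjoint B * mat_adjoint A)"
  with assms have ij: "i < c" "j < r" by auto
  have "mat_adjoint (A * B) $$ (i, j) = conjugate ((A * B) $$ (j, i))"
    using assms ij by simp
  also have "\<dots> = (\<Sum>l<k. conjugate (B $$ (l,i)) * conjugate (A $$ (j,l)))"
    using assms ij by (simp del: index_mult_mat add: index_mult_mat_sum sum_conjugate conjugate_dist_mul mult.commute)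
  also have "\<dots> = (mat_adjoint B * mat_adjoint A) $$ (i, j)"
    using assms ij by (simp del: index_mult_mat add: index_mult_mat_sum[of _ c k _ r])
  finally show "mat_adjoint (A * B) $$ (i, j) = (mat_adjoint B * mat_adjoint A) $$ (i, j)" .
qed (use assms in auto)

lemma mat_adjoint_similar:
  fixes U A :: "'a :: conjugatable_field mat"
  assumes "U \<in> carrier_mat n n" "A \<in> carrier_mat n n"
  shows "mat_adjoint (mat_adjoint U * A * U) = mat_adjoint U * mat_adjoint A * U"
proof -
  have "mat_adjoint (mat_adjoint U * A * U) = mat_adjoint U * mat_adjoint (mat_adjoint U * A)"
    using assms by (intro mat_adjoint_mult[of _ n n]) auto
  also have "mat_adjoint (mat_adjoint U * A) = mat_adjoint A * U"
    using assms by (subst mat_adjoint_mult[of _ n n]) auto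
  finally show ?thesis
    using assms by (simp add: assoc_mult_mat[of _ n n _ n _ n] mult_carrier_mat[of _ n n])
qed

lemma mat_adjoint_mult_similar:
  fixes A B H :: "'a :: conjugatable_field mat"
  assumes "A \<in> carrier_mat n n" "B \<in> carrier_mat n n" "H \<in> carrier_mat n n"
  shows "mat_adjoint B * (mat_adjoint A * H * A) * B = mat_adjoint (A * B) * H * (A * B)"
  using assms
  by (simp add: mat_adjoint_mult[of _ n n _ n] assoc_mult_mat[of _ n n _ n _ n] mult_carrier_mat[of _ n n])

lemma unitary_mat_mult:
  assumes A: "unitary_mat n A" and B: "unitary_mat n B"
  shows "unitary_mat n (A * B)"
proof -
  have [simp]: "A \<in> carrier_mat n n" "B \<in> carrier_mat n n"
      "mat_adjoint A \<in> carrier_mat n n" "mat_adjoint B \<in> carrier_mat n n"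
    and AA: "mat_adjoint A * A = 1\<^sub>m n" "A * mat_adjoint A = 1\<^sub>m n"
    and BB: "mat_adjoint B * B = 1\<^sub>m n" "B * mat_adjoint B = 1\<^sub>m n"
    using A B unfolding unitary_mat_def by auto
  have "mat_adjoint (A * B) * (A * B) = mat_adjoint B * ((mat_adjoint A * A) * B)"
    by (simp add: mat_adjoint_mult[of _ n n _ n] assoc_mult_mat[of _ n n _ n _ n] mult_carrier_mat[of _ n n])
  moreover have "(A * B) * mat_adjoint (A * B) = A * ((B * mat_adjoint B) * mat_adjoint A)"
    by (simp add: mat_adjoint_mult[of _ n n _ n] assoc_mult_mat[of _ n n _ n _ n] mult_carrier_mat[of _ n n])
  ultimately show ?thesis
    unfolding unitary_mat_def by (simp add: AA BB mult_carrier_mat[of _ n n] left_mult_one_mat[of _ n n])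
qed

lemma unitary_similar_mult:
  assumes U: "unitary_mat n U" and "A \<in> carrier_mat n n" "B \<in> carrier_mat n n"
  shows "(mat_adjoint U * A * U) * (mat_adjoint U * B * U) = mat_adjoint U * (A * B) * U"
proof -
  have [simp]: "U \<in> carrier_mat n n" "mat_adjoint U \<in> carrier_mat n n"
    and UU: "U * mat_adjoint U = 1\<^sub>m n"
    using U assms unfolding unitary_mat_def by auto
  have "(mat_adjoint U * A * U) * (mat_adjoint U * B * U) = mat_adjoint U * (A * ((U * mat_adjoint U) * (B * U)))"
    using assms by (simp add: assoc_mult_mat[of _ n n _ n _ n] mult_carrier_mat[of _ n n])
  then show ?thesis using assms by (simp add: UU assoc_mult_mat[of _ n n _ n _ n] mult_carrier_mat[of _ n n])
qed

lemma unitary_similar_anticommute: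
  assumes U: "unitary_mat n U" and A: "A \<in> carrier_mat n n" and B: "B \<in> carrier_mat n n"
    and anti: "A * B = - (B * A)"
  shows "(mat_adjoint U * A * U) * (mat_adjoint U * B * U) = - ((mat_adjoint U * B * U) * (mat_adjoint U * A * U))"
proof -
  have [simp]: "mat_adjoint U \<in> carrier_mat n n" "U \<in> carrier_mat n n"
    using U unfolding unitary_mat_def by auto
  have "mat_adjoint U * - (B * A) * U = - (mat_adjoint U * (B * A) * U)"
    using carrier_matD[OF A] carrier_matD[OF B] carrier_matD[OF \<open>U \<in> carrier_mat n n\<close>] by simp
  then show ?thesis
    using anti U A B by (simp add: unitary_similar_mult)
qed

lemma unitary_mat_col_unit:
  assumes U: "unitary_mat n U" and k: "k < n" and Ukk: "U $$ (k,k) = 1" and l: "l < n"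
  shows "U $$ (l,k) = (if l = k then 1 else 0)"
proof -
  have Uc: "U \<in> carrier_mat n n" and UU: "mat_adjoint U * U = 1\<^sub>m n"
    using U unfolding unitary_mat_def by auto
  have "complex_of_real (\<Sum>j<n. (cmod (U $$ (j,k)))\<^sup>2) = (\<Sum>j<n. cnj (U $$ (j,k)) * U $$ (j,k))"
    by (simp only: of_real_sum complex_norm_square mult.commute)
  also have "\<dots> = (mat_adjoint U * U) $$ (k,k)"
    using Uc k by (simp del: index_mult_mat add: index_mult_mat_sum[of _ n n _ n])
  also have "\<dots> = 1" using UU k by simp
  finally have "(\<Sum>j<n. (cmod (U $$ (j,k)))\<^sup>2) = 1"
    by (metis of_real_eq_1_iff)
  moreover have "(\<Sum>j<n. (cmod (U $$ (j,k)))\<^sup>2) = 1 + (\<Sum>j\<in>{..<n}-{k}. (cmod (U $$ (j,k)))\<^sup>2)"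
    using k Ukk by (simp add: sum.remove)
  ultimately have "\<forall>j\<in>{..<n}-{k}. (cmod (U $$ (j,k)))\<^sup>2 = 0"
    by (simp add: sum_nonneg_eq_0_iff)
  then show ?thesis using l Ukk by auto
qed

lemma unitary_mat_row_of_unit_col:
  assumes U: "unitary_mat n U" and m: "m < n" and k: "k < n"
    and col: "\<And>j. j < n \<Longrightarrow> U $$ (j,k) = (if j = m then 1 else 0)" and i: "i < n"
  shows "U $$ (m,i) = (if i = k then 1 else 0)"
proof -
  have Uc: "U \<in> carrier_mat n n" and UU: "mat_adjoint U * U = 1\<^sub>m n"
    using U unfolding unitary_mat_def by auto
  have "cnj (U $$ (m,i)) = (mat_adjoint U * U) $$ (i,k)"
    using index_mult_mat_unit_col[of "mat_adjoint U" n n U n i k m] Uc m k col i by simp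
  also have "\<dots> = (if i = k then 1 else 0)" using UU i k by simp
  finally show ?thesis by (metis complex_cnj_cnj complex_cnj_one complex_cnj_zero)
qed

lemma unitary_similar_diagonal_col:
  assumes U: "unitary_mat n U" and m: "m < n" and k: "k < n"
    and col: "\<And>j. j < n \<Longrightarrow> U $$ (j,k) = (if j = m then 1 else 0)"
    and D: "D \<in> carrier_mat n n" "diagonal_mat D" and i: "i < n"
  shows "(mat_adjoint U * D * U) $$ (i,k) = (if i = k then D $$ (m,m) else 0)"
proof -
  have Uc: "U \<in> carrier_mat n n"
    using U unfolding unitary_mat_def by auto
  have "(mat_adjoint U * D * U) $$ (i,k) = (mat_adjoint U * D) $$ (i,m)"
    using Uc D i k m col by (intro index_mult_mat_unit_col[of _ n n]) auto
  also have "\<dots> = (\<Sum>j<n. cnj (U $$ (j,i)) * D $$ (j,m))"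
    using Uc D i m by (simp del: index_mult_mat add: index_mult_mat_sum[of _ n n _ n])
  also have "\<dots> = cnj (U $$ (m,i)) * D $$ (m,m)"
    using D m by (intro sum_eq_single) (auto simp: diagonal_mat_def)
  also have "\<dots> = (if i = k then D $$ (m,m) else 0)"
    using unitary_mat_row_of_unit_col[OF U m k col i] by simp
  finally show ?thesis .
qed

lemma mat_adjoint_swaprows_mat:
  "mat_adjoint (swaprows_mat n k l :: complex mat) = swaprows_mat n k l"
  by (rule eq_matI) auto

lemma unitary_swaprows_mat:
  assumes "k < n" "l < n"
  shows "unitary_mat n (swaprows_mat n k l)"
  using assms unfolding unitary_mat_def mat_adjoint_swaprows_mat by (simp add: swaprows_mat_inv)

lemma swap_perm_mat_eq_swaprows_mat: "swap_perm_mat n m = swaprows_mat n 0 m"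
  by (rule eq_matI) (auto simp: swap_perm_mat_def)

lemma unitary_swap_perm_mat: "m < n \<Longrightarrow> unitary_mat n (swap_perm_mat n m)"
  unfolding swap_perm_mat_eq_swaprows_mat by (rule unitary_swaprows_mat) auto

lemma swap_perm_mat_mult_first_col:
  assumes V: "unitary_mat n V" "V $$ (0,0) = 1" and m: "m < n" and j: "j < n"
  shows "(swap_perm_mat n m * V) $$ (j,0) = (if j = m then 1 else 0)"
proof -
  have "(swap_perm_mat n m * V) $$ (j,0) = swap_perm_mat n m $$ (j,0)"
    using V m j unitary_mat_col_unit[OF V(1) _ V(2)]
    by (intro index_mult_mat_unit_col[of _ n n]) (auto simp: unitary_mat_def swap_perm_mat_def)
  then show ?thesis
    unfolding swap_perm_mat_eq_swaprows_mat using m j by auto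
qed

lemma chiral_op_carrier: "chiral_op n \<in> carrier_mat n n"
  by (simp add: chiral_op_def)

lemma index_chiral_op [simp]:
  "i < n \<Longrightarrow> j < n \<Longrightarrow> chiral_op n $$ (i,j) = (if i = j then (if even i then 1 else -1) else 0)"
  by (simp add: chiral_op_def)

lemma diagonal_chiral_op: "diagonal_mat (chiral_op n)"
  by (simp add: diagonal_mat_def chiral_op_def)

lemma mat_adjoint_chiral_op: "mat_adjoint (chiral_op n) = chiral_op n"
  by (rule eq_matI) (auto simp: chiral_op_def)

lemma anticommuting_chain_column_step:
  fixes G T :: "complex mat"
  assumes G: "G \<in> carrier_mat n n" "mat_adjoint G = G"
    and T: "tridiagonal n T" "nonzero_subdiagonal n T"
    and anti: "G * T = - (T * G)"
    and k: "Suc k < n"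
    and prev: "\<And>i j. i < n \<Longrightarrow> j \<le> k \<Longrightarrow> G $$ (i,j) = s * chiral_op n $$ (i,j)"
    and i: "i < n"
  shows "G $$ (i, Suc k) = s * chiral_op n $$ (i, Suc k)"
  \<comment> \<open>Entries above the diagonal follow from hermiticity and the earlier columns; the rest
    from the \<open>(i, k)\<close> entry of \<open>G T = - T G\<close>, where \<open>T\<^bsub>k+1,k\<^esub> \<noteq> 0\<close> can be cancelled.\<close>
proof (cases "i \<le> k")
  case True
  have "G $$ (i, Suc k) = cnj (G $$ (Suc k, i))"
    using G i k by (metis carrier_matD index_mat_adjoint conjugate_complex_def)
  also have "G $$ (Suc k, i) = 0"
    using prev[of "Suc k" i] True k by simp
  finally show ?thesis using True i k by simp
next
  case False
  have Tc: "T \<in> carrier_mat n n"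
    and band: "\<And>a b. a < n \<Longrightarrow> b < n \<Longrightarrow> b + 1 < a \<Longrightarrow> T $$ (a,b) = 0"
    using T unfolding tridiagonal_def by auto
  have "(G * T) $$ (i,k) = (\<Sum>j<n. G $$ (i,j) * T $$ (j,k))"
    using G Tc i k by (intro index_mult_mat_sum) auto
  also have "\<dots> = G $$ (i, Suc k) * T $$ (Suc k, k)"
  proof (rule sum_eq_single)
    fix j assume j: "j \<in> {..<n}" "j \<noteq> Suc k"
    show "G $$ (i,j) * T $$ (j,k) = 0"
    proof (cases "j \<le> k")
      case True
      then show ?thesis using prev[OF i True] False i j k by simp
    next
      case False
      then show ?thesis using band[of j k] j k by simp
    qed
  qed (use k in auto)
  finally have GT: "(G * T) $$ (i,k) = G $$ (i, Suc k) * T $$ (Suc k, k)" .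
  have "(T * G) $$ (i,k) = (\<Sum>j<n. T $$ (i,j) * G $$ (j,k))"
    using G Tc i k by (intro index_mult_mat_sum) auto
  also have "\<dots> = T $$ (i,k) * (s * chiral_op n $$ (k,k))"
    using prev k by (intro trans[OF sum_eq_single[where a = k]]) auto
  finally have TG: "(T * G) $$ (i,k) = T $$ (i,k) * (s * chiral_op n $$ (k,k))" .
  have eq: "G $$ (i, Suc k) * T $$ (Suc k, k) = - (T $$ (i,k) * (s * chiral_op n $$ (k,k)))"
    using arg_cong[OF anti, of "\<lambda>M. M $$ (i,k)"] GT TG G Tc i k by simp
  have sub: "T $$ (Suc k, k) \<noteq> 0"
    using T k unfolding nonzero_subdiagonal_def by simp
  show ?thesis
  proof (cases "i = Suc k")
    case True
    then have "G $$ (i, Suc k) * T $$ (Suc k, k) = s * chiral_op n $$ (i, Suc k) * T $$ (Suc k, k)"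
      using eq k by simp
    then show ?thesis using sub by simp
  next
    case ne: False
    then have "T $$ (i,k) = 0" using band[OF i] False k by simp
    then show ?thesis using eq sub ne i k by simp
  qed
qed

lemma anticommuting_hermitian_eq_smult_chiral_op:
  fixes G T :: "complex mat"
  assumes G: "G \<in> carrier_mat n n" "mat_adjoint G = G"
    and T: "tridiagonal n T" "nonzero_subdiagonal n T"
    and anti: "G * T = - (T * G)"
    and col0: "\<And>i. i < n \<Longrightarrow> G $$ (i,0) = (if i = 0 then s else 0)"
  shows "G = s \<cdot>\<^sub>m chiral_op n"
proof -
  have "G $$ (i,j) = s * chiral_op n $$ (i,j)" if "i < n" "j < n" for i j
    using that
  proof (induction j arbitrary: i rule: less_induct)
    case (less j)
    show ?case
    proof (cases j)
      case 0
      then show ?thesis using col0 less.prems by simp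
    next
      case (Suc k)
      then show ?thesis
        using anticommuting_chain_column_step[OF G T anti] less by simp
    qed
  qed
  then show ?thesis
    using G by (intro eq_matI) (auto simp: chiral_op_def)
qed

lemma anticommuting_diagonal_imp_diag_zero:
  fixes D T :: "'a :: field_char_0 mat"
  assumes D: "D \<in> carrier_mat n n" "diagonal_mat D" and T: "T \<in> carrier_mat n n"
    and anti: "D * T = - (T * D)" and k: "k < n" and Dkk: "D $$ (k,k) \<noteq> 0"
  shows "T $$ (k,k) = 0"
proof -
  have "(D * T) $$ (k,k) = (\<Sum>l<n. D $$ (k,l) * T $$ (l,k))"
    using D T k by (intro index_mult_mat_sum) auto
  also have "\<dots> = D $$ (k,k) * T $$ (k,k)"
    by (rule sum_eq_single) (use D k in \<open>auto simp: diagonal_mat_def\<close>)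
  finally have DT: "(D * T) $$ (k,k) = D $$ (k,k) * T $$ (k,k)" .
  have "(T * D) $$ (k,k) = (\<Sum>l<n. T $$ (k,l) * D $$ (l,k))"
    using D T k by (intro index_mult_mat_sum) auto
  also have "\<dots> = T $$ (k,k) * D $$ (k,k)"
    by (rule sum_eq_single) (use D k in \<open>auto simp: diagonal_mat_def\<close>)
  finally have TD: "(T * D) $$ (k,k) = T $$ (k,k) * D $$ (k,k)" .
  have "2 * (D $$ (k,k) * T $$ (k,k)) = 0"
    using arg_cong[OF anti, of "\<lambda>M. M $$ (k,k)"] DT TD D T k by simp
  then show ?thesis using Dkk by simp
qed

theorem theorem1:
  fixes H Vs :: "complex mat" and n m :: nat
  assumes chiral: "chiral_symmetric n H"
    and anchor: "m < n"
    and unit: "unitary_mat n Vs"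
    and first: "Vs $$ (0,0) = 1"
    and tri: "tridiagonal n (mat_adjoint Vs * (mat_adjoint (swap_perm_mat n m) * H * swap_perm_mat n m) * Vs)"
    and nontriv: "nonzero_subdiagonal n (mat_adjoint Vs * (mat_adjoint (swap_perm_mat n m) * H * swap_perm_mat n m) * Vs)"
  shows "\<forall>i<n. (mat_adjoint Vs * (mat_adjoint (swap_perm_mat n m) * H * swap_perm_mat n m) * Vs) $$ (i,i) = 0"
proof -
  define U where "U = swap_perm_mat n m * Vs"
  define T where "T = mat_adjoint U * H * U"
  define G where "G = mat_adjoint U * chiral_op n * U"
  define s where "s = chiral_op n $$ (m,m)"
  have H: "H \<in> carrier_mat n n" and CH: "chiral_op n * H = - (H * chiral_op n)"
    using chiral unfolding chiral_symmetric_def hermitian_mat_def by auto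
  have U: "unitary_mat n U"
    unfolding U_def using unitary_swap_perm_mat[OF anchor] unit by (rule unitary_mat_mult)
  then have Uc: "U \<in> carrier_mat n n"
    unfolding unitary_mat_def by auto
  have T_eq: "mat_adjoint Vs * (mat_adjoint (swap_perm_mat n m) * H * swap_perm_mat n m) * Vs = T"
    unfolding T_def U_def using unit H unitary_swap_perm_mat[OF anchor]
    by (intro mat_adjoint_mult_similar) (auto simp: unitary_mat_def)
  have T: "T \<in> carrier_mat n n" "tridiagonal n T" "nonzero_subdiagonal n T"
    using tri nontriv unfolding T_eq tridiagonal_def by auto
  have G: "G \<in> carrier_mat n n" "mat_adjoint G = G"
    unfolding G_def using Uc chiral_op_carrier
    by (auto simp: mat_adjoint_similar mat_adjoint_chiral_op mult_carrier_mat[of _ n n])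
  have anti: "G * T = - (T * G)"
    unfolding G_def T_def using unitary_similar_anticommute[OF U chiral_op_carrier H CH] .
  have "G $$ (i,0) = (if i = 0 then s else 0)" if "i < n" for i
    using unitary_similar_diagonal_col[OF U anchor _ _ chiral_op_carrier diagonal_chiral_op that]
      swap_perm_mat_mult_first_col[OF unit first anchor] anchor
    unfolding G_def s_def U_def by simp
  then have "G = s \<cdot>\<^sub>m chiral_op n"
    using anticommuting_hermitian_eq_smult_chiral_op[OF G T(2,3) anti] by blast
  then have diag: "diagonal_mat G" and "\<And>k. k < n \<Longrightarrow> G $$ (k,k) \<noteq> 0"
    using anchor by (auto simp: s_def diagonal_mat_def chiral_op_def)
  then show ?thesis
    unfolding T_eq using anticommuting_diagonal_imp_diag_zero[OF G(1) diag T(1) anti] by blast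
qed

end
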